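(* Let $f\in \mathfrak{D}$ have degree $j$, write $f=\sum_i f_i$ with $f_i$ homogeneous of degree $i$, let $A=R/\operatorname{Ann}_R f$, let $a$ be an integer with $0\le a\le j$, set $f_{\ge j-a}=f_j+f_{j-1}+\cdots+f_{j-a}$ and $A'=R/\operatorname{Ann}_R(f_{\ge j-a})$. Then the partial symmetric decompositions agree: $\mathcal{D}_{\le a}(A)=\mathcal{D}_{\le a}(A')$. These partial decompositions depend only on $f$ modulo $\mathfrak{D}_{\le j-a-1}$ up to the action of a unit of $R$ (i.e. if $g\in\mathfrak{D}$ has degree $j$ and $g-u\circ f\in \mathfrak{D}_{\le j-a-1}$ for some unit $u\in R$, then $\mathcal{D}_{\le a}(R/\operatorname{Ann}_R g)=\mathcal{D}_{\le a}(A)$). Moreover $f_{\ge j-a}$ is an $(a+1)$-modification of $f$, i.e. $(\operatorname{Ann}_R f)\cap \mathfrak{m}_R^{\,j-a}=(\operatorname{Ann}_R f_{\ge j-a})\cap\mathfrak{m}_R^{\,j-a}$.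
   Context: Let $\mathsf{k}$ be a field, $R=\mathsf{k}\{x_1,\ldots,x_r\}$ the formal power series ring with maximal ideal $\mathfrak{m}_R$, and $\mathfrak{D}=\mathsf{k}_{DP}[X_1,\ldots,X_r]$ the divided power algebra (divided powers $X_i^{[n]}$), on which $R$ acts by contraction: $x^{\alpha}\circ X^{[\beta]}=X^{[\beta-\alpha]}$ if $\beta-\alpha\ge 0$ componentwise and $0$ otherwise, extended bilinearly. $\mathfrak{D}_t$ denotes the forms of degree $t$ and $\mathfrak{D}_{\le t}$ the elements of degree at most $t$. For $f\in\mathfrak{D}$ of degree $j$, $\operatorname{Ann}_R f=\{\varphi\in R:\varphi\circ f=0\}$ and $A=R/\operatorname{Ann}_R f$ is an Artinian Gorenstein algebra with maximal ideal $\mathfrak{m}_A$ and socle degree $j$ (largest $i$ with $\mathfrak{m}_A^i\neq 0$). Its associated graded algebra is $A^*=\bigoplus_i \mathfrak{m}_A^i/\mathfrak{m}_A^{i+1}$. For $a\ge 0$ the ideal $C_A(a)\subset A^*$ has degree-$i$ component equal to the image in $\mathfrak{m}_A^i/\mathfrak{m}_A^{i+1}$ of $\mathfrak{m}_A^{i}\cap(0:\mathfrak{m}_A^{\,j+1-a-i})$; $Q_A(a)=C_A(a)/C_A(a+1)$, $H_A(a)$ is the Hilbert function of $Q_A(a)$ ($H_A(a)_i=\dim_{\mathsf{k}}Q_A(a)_i$), and the partial symmetric decomposition is $\mathcal{D}_{\le a}(A)=(H_A(0),\ldots,H_A(a))$. An Artinian Gorenstein ideal $J$ (or a dual generator $g$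 with $J=\operatorname{Ann}_R g$) is called an $b$-modification of $I=\operatorname{Ann}_R f$ (socle degree $j$) if $I\cap\mathfrak{m}_R^{\,j+1-b}=J\cap\mathfrak{m}_R^{\,j+1-b}$. *)

theory Defs
  imports Main "HOL-Library.Function_Algebras"
begin

text \<open>Monomials / exponent vectors in r variables are functions
  nat => nat vanishing from index r on. Both the power series ring
  R = k{x_1..x_r} and the divided power algebra D = k_DP[X_1..X_r] are
  represented by coefficient functions (nat => nat) => 'k; an element of R
  is any coefficient function supported on monomials (PS), an element of D
  is one with finite support (DP). The coefficient of the element of D at
  the exponent vector beta is the coefficient of X^[beta].\<close>

type_synonym 'k coeffs = "(nat \<Rightarrow> nat) \<Rightarrow> 'k"

definition mon :: "nat \<Rightarrow> (nat \<Rightarrow> nat) set" where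
  "mon r = {\<alpha>. \<forall>i\<ge>r. \<alpha> i = 0}"

definition mdeg :: "nat \<Rightarrow> (nat \<Rightarrow> nat) \<Rightarrow> nat" where
  "mdeg r \<alpha> = (\<Sum>i<r. \<alpha> i)"

definition PS :: "nat \<Rightarrow> ('k::field) coeffs set" where
  "PS r = {\<phi>. \<forall>\<alpha>. \<alpha> \<notin> mon r \<longrightarrow> \<phi> \<alpha> = 0}"

definition DP :: "nat \<Rightarrow> ('k::field) coeffs set" where
  "DP r = {F \<in> PS r. finite {\<alpha>. F \<alpha> \<noteq> 0}}"

definition ps_mult :: "('k::field) coeffs \<Rightarrow> 'k coeffs \<Rightarrow> 'k coeffs" where
  "ps_mult \<phi> \<psi> = (\<lambda>\<gamma>. \<Sum>\<alpha>\<in>{\<alpha>. \<forall>i. \<alpha> i \<le> \<gamma> i}. \<phi> \<alpha> * \<psi> (\<gamma> - \<alpha>))"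

definition ps_one :: "('k::field) coeffs" where
  "ps_one = (\<lambda>\<alpha>. if \<alpha> = 0 then 1 else 0)"

definition is_unit_R :: "nat \<Rightarrow> ('k::field) coeffs \<Rightarrow> bool" where
  "is_unit_R r u \<longleftrightarrow> u \<in> PS r \<and> (\<exists>v\<in>PS r. ps_mult u v = ps_one)"

text \<open>Contraction action of R on D:
  x^alpha o X^[beta] = X^[beta - alpha] if alpha <= beta, else 0.\<close>
definition contract :: "nat \<Rightarrow> ('k::field) coeffs \<Rightarrow> 'k coeffs \<Rightarrow> 'k coeffs" where
  "contract r \<phi> F = (\<lambda>\<gamma>. if \<gamma> \<in> mon r then
      (\<Sum>\<beta>\<in>{\<beta>. F \<beta> \<noteq> 0}. if (\<forall>i. \<gamma> i \<le> \<beta> i) then \<phi> (\<beta> - \<gamma>) * F \<beta> else 0)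
    else 0)"

definition Ann :: "nat \<Rightarrow> ('k::field) coeffs \<Rightarrow> 'k coeffs set" where
  "Ann r F = {\<phi> \<in> PS r. contract r \<phi> F = (\<lambda>_. 0)}"

definition has_degree :: "nat \<Rightarrow> ('k::field) coeffs \<Rightarrow> nat \<Rightarrow> bool" where
  "has_degree r F j \<longleftrightarrow> (\<forall>\<beta>. F \<beta> \<noteq> 0 \<longrightarrow> mdeg r \<beta> \<le> j) \<and> (\<exists>\<beta>. F \<beta> \<noteq> 0 \<and> mdeg r \<beta> = j)"

text \<open>Elements of D of degree < t  (so D_{<= t-1}).\<close>
definition Dlt :: "nat \<Rightarrow> nat \<Rightarrow> ('k::field) coeffs set" where
  "Dlt r t = {F \<in> DP r. \<forall>\<beta>. F \<beta> \<noteq> 0 \<longrightarrow> mdeg r \<beta> < t}"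

definition trunc_ge :: "nat \<Rightarrow> ('k::field) coeffs \<Rightarrow> nat \<Rightarrow> 'k coeffs" where
  "trunc_ge r F m = (\<lambda>\<beta>. if m \<le> mdeg r \<beta> then F \<beta> else 0)"

definition mpow :: "nat \<Rightarrow> nat \<Rightarrow> ('k::field) coeffs set" where
  "mpow r i = {\<phi> \<in> PS r. \<forall>\<alpha>. mdeg r \<alpha> < i \<longrightarrow> \<phi> \<alpha> = 0}"

definition ssum :: "('k::field) coeffs set \<Rightarrow> 'k coeffs set \<Rightarrow> 'k coeffs set" where
  "ssum U V = {u + v | u v. u \<in> U \<and> v \<in> V}"

definition colon :: "nat \<Rightarrow> ('k::field) coeffs set \<Rightarrow> 'k coeffs set \<Rightarrow> 'k coeffs set" where
  "colon r I K = {\<phi> \<in> PS r. \<forall>\<psi>\<in>K. ps_mult \<phi> \<psi> \<in> I}"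

text \<open>Dimension of the quotient space V/U (U a subspace of V):
  the supremum of sizes of finite subsets of V linearly independent modulo U.\<close>
definition qdim :: "('k::field) coeffs set \<Rightarrow> 'k coeffs set \<Rightarrow> nat" where
  "qdim V U = Sup {card S | S. finite S \<and> S \<subseteq> V \<and>
      (\<forall>c. (\<Sum>s\<in>S. (\<lambda>x. c s * s x)) \<in> U \<longrightarrow> (\<forall>s\<in>S. c s = 0))}"

text \<open>Socle degree of A = R/I: the largest i with m_A^i \<noteq> 0, i.e. m_R^i not contained in I.\<close>
definition socdeg :: "nat \<Rightarrow> ('k::field) coeffs set \<Rightarrow> nat" where
  "socdeg r I = (GREATEST i. \<not> (mpow r i \<subseteq> (I :: 'k coeffs set)))"

text \<open>Preimage in R of C_A(a)_i + m_A^{i+1}, where A = R/I of socle degree j: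
  ((m_R^i + I) \<inter> (I : m_R^{j+1-a-i})) + m_R^{i+1} + I.
  (If j+1-a-i <= 0 then m_A^{j+1-a-i} = A and (0 : A) = 0, which matches
  the truncated natural-number subtraction, since (I : R) = I.)\<close>
definition Wsp :: "nat \<Rightarrow> ('k::field) coeffs set \<Rightarrow> nat \<Rightarrow> nat \<Rightarrow> 'k coeffs set" where
  "Wsp r I a i = ssum (ssum (ssum (mpow r i) I \<inter> colon r I (mpow r (socdeg r I + 1 - a - i)))
                            (mpow r (Suc i))) I"

text \<open>H_A(a)_i = dim Q_A(a)_i = dim C_A(a)_i / C_A(a+1)_i.\<close>
definition HA :: "nat \<Rightarrow> ('k::field) coeffs set \<Rightarrow> nat \<Rightarrow> nat \<Rightarrow> nat" where
  "HA r I a i = qdim (Wsp r I a i) (Wsp r I (Suc a) i)"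

definition psd :: "nat \<Rightarrow> ('k::field) coeffs set \<Rightarrow> nat \<Rightarrow> (nat \<Rightarrow> nat) list" where
  "psd r I a = map (\<lambda>b. HA r I b) [0..<Suc a]"

definition is_modification :: "nat \<Rightarrow> ('k::field) coeffs set \<Rightarrow> 'k coeffs set \<Rightarrow> nat \<Rightarrow> bool" where
  "is_modification r I J b \<longleftrightarrow>
     I \<inter> mpow r (socdeg r I + 1 - b) = J \<inter> mpow r (socdeg r I + 1 - b)"

end

(*
  With I = Ann f, the degree-i part of C_A(b) + m_A^(i+1) lifts to
  (m^i /\ (I : m^(j+1-b-i))) + m^(i+1) + I, and adding the ideal I changes no quotient
  dimension, because I is contained in every colon ideal (I : K) (second isomorphism
  theorem). For b <= a+1 a product of an element of m^i with one of m^(j+1-b-i) lies in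
  m^(j-a), and an element of m^(j-a) contracts f exactly as it contracts f_{>= j-a}.
  So D_{<=a}(A) only depends on Ann f /\ m^(j-a), which is the same for f, for f_{>= j-a},
  and for every g agreeing with u o f in degrees >= j-a, since Ann (u o f) = Ann f for a
  unit u.
*)
theory Submission
  imports Defs "HOL.Modules"
begin

section \<open>Exponent vectors\<close>

lemma finite_lower_set:
  assumes "\<gamma> \<in> mon r"
  shows "finite {\<alpha>. \<forall>i. \<alpha> i \<le> \<gamma> i}"
proof (rule finite_subset[OF _ finite_set_of_finite_funs[of "{..<r}" "{..mdeg r \<gamma>}" 0]])
  show "{\<alpha>. \<forall>i. \<alpha> i \<le> \<gamma> i} \<subseteq>
      {\<alpha>. \<forall>i. (i \<in> {..<r} \<longrightarrow> \<alpha> i \<in> {..mdeg r \<gamma>}) \<and> (i \<notin> {..<r} \<longrightarrow> \<alpha> i = 0)}"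
  proof (intro subsetI CollectI allI conjI impI)
    fix \<alpha> i assume "\<alpha> \<in> {\<alpha>. \<forall>i. \<alpha> i \<le> \<gamma> i}"
    then have le: "\<alpha> i \<le> \<gamma> i" by simp
    show "\<alpha> i \<in> {..mdeg r \<gamma>}" if "i \<in> {..<r}"
      using le_trans[OF le member_le_sum[of i "{..<r}" \<gamma>]] that by (simp add: mdeg_def)
    show "\<alpha> i = 0" if "i \<notin> {..<r}"
      using le assms that by (simp add: mon_def)
  qed
qed auto

lemma mdeg_diff_le: "mdeg r (\<beta> - \<gamma>) \<le> mdeg r \<beta>"
  unfolding mdeg_def by (rule sum_mono) auto

lemma mdeg_add_diff: "\<forall>i. \<alpha> i \<le> \<gamma> i \<Longrightarrow> mdeg r \<alpha> + mdeg r (\<gamma> - \<alpha>) = mdeg r \<gamma>"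
  unfolding mdeg_def by (simp add: sum.distrib[symmetric])

lemma mon_le: "\<beta> \<in> mon r \<Longrightarrow> \<forall>i. \<alpha> i \<le> \<beta> i \<Longrightarrow> \<alpha> \<in> mon r"
  by (simp add: mon_def) (metis le_zero_eq)

lemma DP_finite_support: "F \<in> DP r \<Longrightarrow> finite {\<beta>. F \<beta> \<noteq> 0}"
  by (simp add: DP_def)

lemma DP_support_mon: "F \<in> DP r \<Longrightarrow> F \<beta> \<noteq> 0 \<Longrightarrow> \<beta> \<in> mon r"
  by (auto simp: DP_def PS_def)

lemma finite_lower_closure:
  assumes "F \<in> DP r"
  shows "finite (\<Union>\<beta>\<in>{\<beta>. F \<beta> \<noteq> 0}. {\<gamma>. \<forall>i. \<gamma> i \<le> \<beta> i})"
  using assms by (auto intro!: finite_lower_set[OF DP_support_mon] simp: DP_finite_support)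

section \<open>Contraction\<close>

lemma contract_support:
  "{\<gamma>. contract r \<phi> F \<gamma> \<noteq> 0} \<subseteq> (\<Union>\<beta>\<in>{\<beta>. F \<beta> \<noteq> 0}. {\<gamma>. \<forall>i. \<gamma> i \<le> \<beta> i})"
  by (auto simp: contract_def split: if_splits elim!: sum.not_neutral_contains_not_neutral)

lemma contract_eq_sum:
  assumes "finite T" "{\<beta>. F \<beta> \<noteq> 0} \<subseteq> T"
  shows "contract r \<phi> F \<gamma> = (if \<gamma> \<in> mon r then
      (\<Sum>\<beta>\<in>T. if \<forall>i. \<gamma> i \<le> \<beta> i then \<phi> (\<beta> - \<gamma>) * F \<beta> else 0) else 0)"
  unfolding contract_def using assms by (auto intro!: sum.mono_neutral_left split: if_splits)

lemma contract_DP: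
  assumes "F \<in> DP r"
  shows "contract r \<phi> F \<in> DP r"
proof -
  have "finite {\<gamma>. contract r \<phi> F \<gamma> \<noteq> 0}"
    using finite_subset[OF contract_support finite_lower_closure[OF assms]] .
  moreover have "contract r \<phi> F \<in> PS r" by (simp add: PS_def contract_def)
  ultimately show ?thesis by (simp add: DP_def)
qed

lemma contract_zero_left: "contract r 0 F = (\<lambda>_. 0)"
  by (rule ext) (simp add: contract_def cong: if_cong)

lemma contract_zero_right: "contract r \<phi> (\<lambda>_. 0) = (\<lambda>_. 0)"
  by (simp add: contract_def fun_eq_iff)

lemma contract_at_zero:
  "contract r \<phi> F 0 = (\<Sum>\<beta>\<in>{\<beta>. F \<beta> \<noteq> 0}. \<phi> \<beta> * F \<beta>)"
  by (simp add: contract_def mon_def)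

lemma contract_add: "contract r (\<phi> + \<psi>) F = contract r \<phi> F + contract r \<psi> F"
  by (simp add: contract_def fun_eq_iff sum.distrib[symmetric] if_distrib distrib_right cong: if_cong)

lemma contract_scale: "contract r (\<lambda>z. c * \<phi> z) F = (\<lambda>z. c * contract r \<phi> F z)"
  by (auto simp: contract_def fun_eq_iff sum_distrib_left intro!: sum.cong)

lemma ps_mult_comm: "ps_mult \<phi> \<psi> = ps_mult \<psi> \<phi>"
  unfolding ps_mult_def
proof (rule ext, rule sum.reindex_bij_witness[where i="\<lambda>\<alpha>. _ - \<alpha>" and j="\<lambda>\<alpha>. _ - \<alpha>"])
  fix \<gamma> \<alpha> :: "nat \<Rightarrow> nat"
  assume "\<alpha> \<in> {\<alpha>. \<forall>i. \<alpha> i \<le> \<gamma> i}"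
  then have "\<gamma> - (\<gamma> - \<alpha>) = \<alpha>" by (auto simp: fun_eq_iff)
  then show "\<gamma> - (\<gamma> - \<alpha>) = \<alpha>" "\<psi> (\<gamma> - \<alpha>) * \<phi> (\<gamma> - (\<gamma> - \<alpha>)) = \<phi> \<alpha> * \<psi> (\<gamma> - \<alpha>)"
    by (simp_all add: mult.commute)
qed auto

lemma ps_mult_add: "ps_mult (\<phi> + \<phi>') \<psi> = ps_mult \<phi> \<psi> + ps_mult \<phi>' \<psi>"
  by (simp add: ps_mult_def fun_eq_iff sum.distrib[symmetric] distrib_right)

lemma ps_mult_scale: "ps_mult (\<lambda>z. c * \<phi> z) \<psi> = (\<lambda>z. c * ps_mult \<phi> \<psi> z)"
  by (simp add: ps_mult_def fun_eq_iff sum_distrib_left mult.assoc)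

lemma ps_mult_zero: "ps_mult 0 \<psi> = 0"
  by (simp add: ps_mult_def fun_eq_iff)

lemma ps_mult_PS:
  assumes "\<phi> \<in> PS r" "\<psi> \<in> PS r"
  shows "ps_mult \<phi> \<psi> \<in> PS r"
proof -
  have "\<phi> \<alpha> * \<psi> (\<gamma> - \<alpha>) = 0" if "\<gamma> \<notin> mon r" "\<forall>i. \<alpha> i \<le> \<gamma> i" for \<gamma> \<alpha>
  proof (cases "\<alpha> \<in> mon r")
    case True
    with that have "\<gamma> - \<alpha> \<notin> mon r" by (auto simp: mon_def)
    then show ?thesis using assms by (simp add: PS_def)
  qed (use assms in \<open>simp add: PS_def\<close>)
  then show ?thesis by (auto simp: PS_def ps_mult_def intro!: sum.neutral)
qed

lemma ps_mult_mpow: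
  assumes "\<phi> \<in> mpow r i" "\<psi> \<in> mpow r k"
  shows "ps_mult \<phi> \<psi> \<in> mpow r (i + k)"
proof -
  have "\<phi> \<alpha> * \<psi> (\<gamma> - \<alpha>) = 0" if "mdeg r \<gamma> < i + k" "\<forall>l. \<alpha> l \<le> \<gamma> l" for \<gamma> \<alpha>
  proof -
    have "mdeg r \<alpha> < i \<or> mdeg r (\<gamma> - \<alpha>) < k" using that mdeg_add_diff[OF that(2), of r] by linarith
    then show ?thesis using assms by (auto simp: mpow_def)
  qed
  then show ?thesis using assms ps_mult_PS
    by (auto simp: mpow_def ps_mult_def intro!: sum.neutral)
qed

lemma ps_mult_as_interval_sum:
  assumes "\<forall>i. \<gamma> i \<le> \<delta> i"
  shows "ps_mult \<phi> \<psi> (\<delta> - \<gamma>) =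
    (\<Sum>\<beta> | (\<forall>i. \<gamma> i \<le> \<beta> i) \<and> (\<forall>i. \<beta> i \<le> \<delta> i). \<phi> (\<beta> - \<gamma>) * \<psi> (\<delta> - \<beta>))"
  unfolding ps_mult_def
proof (rule sum.reindex_bij_witness[where i="\<lambda>\<beta>. \<beta> - \<gamma>" and j="\<lambda>\<alpha>. \<alpha> + \<gamma>"])
  fix \<alpha> assume "\<alpha> \<in> {\<alpha>. \<forall>i. \<alpha> i \<le> (\<delta> - \<gamma>) i}"
  with assms show "\<alpha> + \<gamma> - \<gamma> = \<alpha>"
    and "\<alpha> + \<gamma> \<in> {\<beta>. (\<forall>i. \<gamma> i \<le> \<beta> i) \<and> (\<forall>i. \<beta> i \<le> \<delta> i)}"
    by (auto simp: fun_eq_iff le_diff_conv2 add.commute)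
  have "\<delta> - (\<alpha> + \<gamma>) = \<delta> - \<gamma> - \<alpha>" by (simp add: fun_eq_iff add.commute)
  then show "\<phi> (\<alpha> + \<gamma> - \<gamma>) * \<psi> (\<delta> - (\<alpha> + \<gamma>)) = \<phi> \<alpha> * \<psi> (\<delta> - \<gamma> - \<alpha>)"
    by simp
next
  fix \<beta> assume "\<beta> \<in> {\<beta>. (\<forall>i. \<gamma> i \<le> \<beta> i) \<and> (\<forall>i. \<beta> i \<le> \<delta> i)}"
  then show "\<beta> - \<gamma> + \<gamma> = \<beta>" and "\<beta> - \<gamma> \<in> {\<alpha>. \<forall>i. \<alpha> i \<le> (\<delta> - \<gamma>) i}"
    by (auto simp: fun_eq_iff diff_le_mono)
qed

lemma ps_mult_as_sum_over_superset:
  assumes T: "finite T" "{\<beta>. \<forall>i. \<beta> i \<le> \<delta> i} \<subseteq> T"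
  shows "(\<Sum>\<beta>\<in>T. if (\<forall>i. \<gamma> i \<le> \<beta> i) \<and> (\<forall>i. \<beta> i \<le> \<delta> i) then \<phi> (\<beta> - \<gamma>) * \<psi> (\<delta> - \<beta>) else 0) =
    (if \<forall>i. \<gamma> i \<le> \<delta> i then ps_mult \<phi> \<psi> (\<delta> - \<gamma>) else 0)"
proof (cases "\<forall>i. \<gamma> i \<le> \<delta> i")
  case True
  have "{\<beta>\<in>T. (\<forall>i. \<gamma> i \<le> \<beta> i) \<and> (\<forall>i. \<beta> i \<le> \<delta> i)} =
      {\<beta>. (\<forall>i. \<gamma> i \<le> \<beta> i) \<and> (\<forall>i. \<beta> i \<le> \<delta> i)}"
    using T(2) by blast
  then show ?thesis
    using True by (simp add: sum.inter_filter[OF T(1), symmetric] ps_mult_as_interval_sum)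
next
  case False
  then have empty: "((\<forall>i. \<gamma> i \<le> \<beta> i) \<and> (\<forall>i. \<beta> i \<le> \<delta> i)) = False" for \<beta>
    using order_trans by blast
  show ?thesis unfolding empty using False by auto
qed

lemma contract_mult:
  assumes F: "F \<in> DP r"
  shows "contract r (ps_mult \<phi> \<psi>) F = contract r \<phi> (contract r \<psi> F)"
proof
  fix \<gamma>
  define S where "S = {\<beta>. F \<beta> \<noteq> 0}"
  define T where "T = (\<Union>\<beta>\<in>S. {\<gamma>. \<forall>i. \<gamma> i \<le> \<beta> i})"
  have "finite S" "finite T"
    using DP_finite_support[OF F] finite_lower_closure[OF F] by (simp_all add: S_def T_def)
  let ?term = "\<lambda>\<beta> \<delta>. (if (\<forall>i. \<gamma> i \<le> \<beta> i) \<and> (\<forall>i. \<beta> i \<le> \<delta> i)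
    then \<phi> (\<beta> - \<gamma>) * \<psi> (\<delta> - \<beta>) else 0) * F \<delta>"
  show "contract r (ps_mult \<phi> \<psi>) F \<gamma> = contract r \<phi> (contract r \<psi> F) \<gamma>"
  proof (cases "\<gamma> \<in> mon r")
    case False
    then show ?thesis by (simp add: contract_def)
  next
    case True
    have "contract r \<phi> (contract r \<psi> F) \<gamma> =
        (\<Sum>\<beta>\<in>T. if \<forall>i. \<gamma> i \<le> \<beta> i then \<phi> (\<beta> - \<gamma>) * contract r \<psi> F \<beta> else 0)"
      using True contract_eq_sum[OF \<open>finite T\<close> contract_support[of r \<psi> F, folded S_def, folded T_def]]
      by simp
    also have "\<dots> = (\<Sum>\<beta>\<in>T. \<Sum>\<delta>\<in>S. ?term \<beta> \<delta>)"
    proof (rule sum.cong[OF refl])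
      fix \<beta> assume "\<beta> \<in> T"
      then have "\<beta> \<in> mon r" using mon_le[OF DP_support_mon[OF F]] by (auto simp: T_def S_def)
      then show "(if \<forall>i. \<gamma> i \<le> \<beta> i then \<phi> (\<beta> - \<gamma>) * contract r \<psi> F \<beta> else 0) = (\<Sum>\<delta>\<in>S. ?term \<beta> \<delta>)"
        by (cases "\<forall>i. \<gamma> i \<le> \<beta> i")
          (auto simp: contract_def S_def sum_distrib_left mult.assoc intro!: sum.cong sum.neutral)
    qed
    also have "\<dots> = (\<Sum>\<delta>\<in>S. \<Sum>\<beta>\<in>T. ?term \<beta> \<delta>)"
      by (rule sum.swap)
    also have "\<dots> = (\<Sum>\<delta>\<in>S. (if \<forall>i. \<gamma> i \<le> \<delta> i then ps_mult \<phi> \<psi> (\<delta> - \<gamma>) else 0) * F \<delta>)"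
    proof (rule sum.cong[OF refl])
      fix \<delta> assume "\<delta> \<in> S"
      then have "{\<beta>. \<forall>i. \<beta> i \<le> \<delta> i} \<subseteq> T" by (auto simp: T_def)
      then show "(\<Sum>\<beta>\<in>T. ?term \<beta> \<delta>) = (if \<forall>i. \<gamma> i \<le> \<delta> i then ps_mult \<phi> \<psi> (\<delta> - \<gamma>) else 0) * F \<delta>"
        by (simp only: sum_distrib_right[symmetric] ps_mult_as_sum_over_superset[OF \<open>finite T\<close>])
    qed
    also have "\<dots> = contract r (ps_mult \<phi> \<psi>) F \<gamma>"
      using True by (auto simp: contract_def S_def intro!: sum.cong)
    finally show ?thesis ..
  qed
qed

lemma contract_one:
  assumes "F \<in> DP r"
  shows "contract r ps_one F = F"
proof
  fix \<gamma>
  have "(\<forall>i. \<gamma> i \<le> \<beta> i) \<and> \<beta> - \<gamma> = 0 \<longleftrightarrow> \<beta> = \<gamma>" for \<beta> :: "nat \<Rightarrow> nat"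
    by (auto simp: fun_eq_iff) (meson antisym diff_is_0_eq)+
  then have "(if \<forall>i. \<gamma> i \<le> \<beta> i then ps_one (\<beta> - \<gamma>) * F \<beta> else 0) = (if \<beta> = \<gamma> then F \<beta> else 0)"
    for \<beta>
    by (auto simp: ps_one_def)
  then show "contract r ps_one F \<gamma> = F \<gamma>"
    using DP_finite_support[OF assms] DP_support_mon[OF assms]
    by (cases "\<gamma> \<in> mon r") (auto simp: contract_def)
qed

lemma contract_commute:
  "F \<in> DP r \<Longrightarrow> contract r \<phi> (contract r \<psi> F) = contract r \<psi> (contract r \<phi> F)"
  by (metis contract_mult ps_mult_comm)

section \<open>The annihilator ideal\<close>

global_interpretation coeffs: module "\<lambda>(c::'k::field) (F::'k coeffs) z. c * F z"
  by unfold_locales (simp_all add: fun_eq_iff algebra_simps)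

lemma subspace_PS: "coeffs.subspace (PS r)"
  by (auto simp: coeffs.subspace_def PS_def)

lemma subspace_mpow: "coeffs.subspace (mpow r i)"
  by (auto simp: coeffs.subspace_def mpow_def PS_def)

lemma subspace_colon: "coeffs.subspace I \<Longrightarrow> coeffs.subspace (colon r I K)"
  using subspace_PS[of r]
  by (auto simp: coeffs.subspace_def colon_def ps_mult_add ps_mult_scale ps_mult_zero)

lemma subspace_Ann: "coeffs.subspace (Ann r F)"
proof (rule coeffs.subspaceI)
  show "0 \<in> Ann r F" by (simp add: Ann_def PS_def contract_zero_left)
  show "\<phi> + \<psi> \<in> Ann r F" if "\<phi> \<in> Ann r F" "\<psi> \<in> Ann r F" for \<phi> \<psi>
    using that coeffs.subspace_add[OF subspace_PS] by (auto simp: Ann_def contract_add fun_eq_iff)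
  show "(\<lambda>z. c * \<phi> z) \<in> Ann r F" if "\<phi> \<in> Ann r F" for c \<phi>
    using that coeffs.subspace_scale[OF subspace_PS] by (auto simp: Ann_def contract_scale fun_eq_iff)
qed

definition is_ideal :: "nat \<Rightarrow> ('k::field) coeffs set \<Rightarrow> bool" where
  "is_ideal r I \<longleftrightarrow> I \<subseteq> PS r \<and> coeffs.subspace I \<and> (\<forall>\<phi>\<in>I. \<forall>\<psi>\<in>PS r. ps_mult \<phi> \<psi> \<in> I)"

lemma is_ideal_Ann:
  assumes F: "F \<in> DP r"
  shows "is_ideal r (Ann r F)"
proof -
  have "ps_mult \<phi> \<psi> \<in> Ann r F" if "\<phi> \<in> Ann r F" "\<psi> \<in> PS r" for \<phi> \<psi>
  proof -
    have "contract r (ps_mult \<phi> \<psi>) F = contract r \<psi> (contract r \<phi> F)"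
      by (simp add: ps_mult_comm[of \<phi>] contract_mult[OF F])
    then show ?thesis using that by (simp add: Ann_def contract_zero_right ps_mult_PS)
  qed
  then show ?thesis using subspace_Ann by (auto simp: is_ideal_def Ann_def)
qed

lemma Ann_contract_unit:
  assumes F: "F \<in> DP r" and u: "is_unit_R r u"
  shows "Ann r (contract r u F) = Ann r F"
proof -
  obtain v where "ps_mult v u = ps_one"
    using u by (auto simp: is_unit_R_def ps_mult_comm)
  then have F_eq: "contract r v (contract r u F) = F"
    using contract_mult[OF F, of v u] contract_one[OF F] by simp
  have "contract r \<phi> (contract r u F) = (\<lambda>_. 0) \<longleftrightarrow> contract r \<phi> F = (\<lambda>_. 0)" for \<phi>
  proof
    assume \<phi>: "contract r \<phi> (contract r u F) = (\<lambda>_. 0)"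
    have "contract r \<phi> F = contract r \<phi> (contract r v (contract r u F))"
      by (simp only: F_eq)
    also have "\<dots> = contract r v (contract r \<phi> (contract r u F))"
      by (rule contract_commute[OF contract_DP[OF F]])
    finally show "contract r \<phi> F = (\<lambda>_. 0)"
      using \<phi> by (simp add: contract_zero_right)
  next
    assume "contract r \<phi> F = (\<lambda>_. 0)"
    then show "contract r \<phi> (contract r u F) = (\<lambda>_. 0)"
      using contract_commute[OF F, of \<phi> u] by (simp add: contract_zero_right)
  qed
  then show ?thesis by (simp add: Ann_def)
qed

lemma contract_trunc_ge:
  assumes F: "F \<in> DP r" and \<rho>: "\<rho> \<in> mpow r N"
  shows "contract r \<rho> (trunc_ge r F N) = contract r \<rho> F"
proof
  fix \<gamma>
  define T where "T = {\<beta>. F \<beta> \<noteq> 0}"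
  have T: "finite T" "{\<beta>. trunc_ge r F N \<beta> \<noteq> 0} \<subseteq> T"
    using DP_finite_support[OF F] by (auto simp: T_def trunc_ge_def)
  have eq: "\<rho> (\<beta> - \<gamma>) * trunc_ge r F N \<beta> = \<rho> (\<beta> - \<gamma>) * F \<beta>" for \<beta>
  proof (cases "N \<le> mdeg r \<beta>")
    case False
    then have "mdeg r (\<beta> - \<gamma>) < N" using mdeg_diff_le[of r \<beta> \<gamma>] by linarith
    then show ?thesis using \<rho> by (simp add: mpow_def)
  qed (simp add: trunc_ge_def)
  have "contract r \<rho> (trunc_ge r F N) \<gamma> = (if \<gamma> \<in> mon r then
      (\<Sum>\<beta>\<in>T. if \<forall>i. \<gamma> i \<le> \<beta> i then \<rho> (\<beta> - \<gamma>) * trunc_ge r F N \<beta> else 0) else 0)"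
    by (rule contract_eq_sum[OF T])
  also have "\<dots> = contract r \<rho> F \<gamma>"
    by (simp only: eq) (simp add: contract_def T_def)
  finally show "contract r \<rho> (trunc_ge r F N) \<gamma> = contract r \<rho> F \<gamma>" .
qed

lemma Ann_Int_mpow_trunc_ge:
  "F \<in> DP r \<Longrightarrow> Ann r (trunc_ge r F N) \<inter> mpow r N = Ann r F \<inter> mpow r N"
  by (auto simp: Ann_def contract_trunc_ge)

lemma mpow_subset_Ann:
  fixes F :: "('k::field) coeffs"
  assumes F: "F \<in> DP r" and deg: "\<forall>\<beta>. F \<beta> \<noteq> 0 \<longrightarrow> mdeg r \<beta> < N"
  shows "mpow r N \<subseteq> Ann r F"
proof
  fix \<rho> :: "'k coeffs" assume \<rho>: "\<rho> \<in> mpow r N"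
  have "trunc_ge r F N = (\<lambda>_. 0)" using deg by (auto simp: trunc_ge_def fun_eq_iff)
  then have "contract r \<rho> F = (\<lambda>_. 0)"
    using contract_trunc_ge[OF F \<rho>] by (simp add: contract_zero_right)
  then show "\<rho> \<in> Ann r F" using \<rho> by (simp add: Ann_def mpow_def)
qed

lemma socdeg_Ann:
  fixes F :: "('k::field) coeffs"
  assumes F: "F \<in> DP r" and deg: "has_degree r F j"
  shows "socdeg r (Ann r F) = j"
  unfolding socdeg_def
proof (rule Greatest_equality)
  obtain \<beta> where \<beta>: "F \<beta> \<noteq> 0" "mdeg r \<beta> = j" using deg by (auto simp: has_degree_def)
  let ?x = "\<lambda>\<alpha>. if \<alpha> = \<beta> then 1 else 0 :: 'k"
  have "?x \<in> mpow r j" using \<beta> DP_support_mon[OF F] by (auto simp: mpow_def PS_def)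
  moreover have "contract r ?x F 0 = (\<Sum>\<beta>'\<in>{\<beta>. F \<beta> \<noteq> 0}. if \<beta>' = \<beta> then F \<beta>' else 0)"
    unfolding contract_at_zero by (rule sum.cong) auto
  then have "contract r ?x F 0 = F \<beta>" using DP_finite_support[OF F] \<beta> by simp
  then have "?x \<notin> Ann r F" using \<beta> by (auto simp: Ann_def)
  ultimately show "\<not> mpow r j \<subseteq> Ann r F" by blast
next
  fix y assume "\<not> mpow r y \<subseteq> Ann r F"
  moreover have "\<forall>\<beta>. F \<beta> \<noteq> 0 \<longrightarrow> mdeg r \<beta> < y" if "j < y"
    using deg that by (auto simp: has_degree_def)
  ultimately show "y \<le> j" using mpow_subset_Ann[OF F] by (meson not_le)
qed

lemma trunc_ge_DP: "F \<in> DP r \<Longrightarrow> trunc_ge r F N \<in> DP r"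
  unfolding DP_def PS_def trunc_ge_def by (auto intro: finite_subset)

lemma has_degree_trunc_ge: "has_degree r F j \<Longrightarrow> N \<le> j \<Longrightarrow> has_degree r (trunc_ge r F N) j"
  unfolding has_degree_def trunc_ge_def by auto

lemma trunc_ge_eq_if_diff_Dlt: "G - H \<in> Dlt r N \<Longrightarrow> trunc_ge r G N = trunc_ge r H N"
  unfolding Dlt_def trunc_ge_def by (force simp: fun_eq_iff)

lemma Ann_Int_mpow_eq_if_trunc_ge_eq:
  assumes "F \<in> DP r" "G \<in> DP r" "trunc_ge r F N = trunc_ge r G N"
  shows "Ann r F \<inter> mpow r N = Ann r G \<inter> mpow r N"
  using Ann_Int_mpow_trunc_ge[OF assms(1), of N] Ann_Int_mpow_trunc_ge[OF assms(2), of N] assms(3)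
  by simp

section \<open>Dimensions of quotients of subspaces\<close>

lemma ssum_iff: "z \<in> ssum U V \<longleftrightarrow> (\<exists>u\<in>U. \<exists>v\<in>V. z = u + v)"
  by (auto simp: ssum_def)

lemma ssumI: "u \<in> U \<Longrightarrow> v \<in> V \<Longrightarrow> u + v \<in> ssum U V"
  by (auto simp: ssum_iff)

lemma ssumE:
  assumes "z \<in> ssum U V"
  obtains u v where "u \<in> U" "v \<in> V" "z = u + v"
  using assms by (auto simp: ssum_iff)

lemma subset_ssum_left: "0 \<in> V \<Longrightarrow> U \<subseteq> ssum U V"
  by (metis add.right_neutral ssumI subsetI)

lemma subset_ssum_right: "0 \<in> U \<Longrightarrow> V \<subseteq> ssum U V"
  by (metis add.left_neutral ssumI subsetI)

lemma subspace_ssum: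
  assumes U: "coeffs.subspace U" and V: "coeffs.subspace V"
  shows "coeffs.subspace (ssum U V)"
proof (rule coeffs.subspaceI)
  show "0 \<in> ssum U V"
    using ssumI[OF coeffs.subspace_0[OF U] coeffs.subspace_0[OF V]] by simp
  show "x + y \<in> ssum U V" if x: "x \<in> ssum U V" and y: "y \<in> ssum U V" for x y
  proof -
    obtain u v where "u \<in> U" "v \<in> V" "x = u + v"
      using x by (rule ssumE)
    moreover obtain u' v' where "u' \<in> U" "v' \<in> V" "y = u' + v'"
      using y by (rule ssumE)
    ultimately have "x + y = (u + u') + (v + v')" "u + u' \<in> U" "v + v' \<in> V"
      using coeffs.subspace_add[OF U] coeffs.subspace_add[OF V] by (simp_all add: algebra_simps)
    then show ?thesis by (simp add: ssumI)
  qed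
  show "(\<lambda>z. c * x z) \<in> ssum U V" if x: "x \<in> ssum U V" for c x
  proof -
    obtain u v where "u \<in> U" "v \<in> V" "x = u + v"
      using x by (rule ssumE)
    then have "(\<lambda>z. c * x z) = (\<lambda>z. c * u z) + (\<lambda>z. c * v z)"
      by (simp add: fun_eq_iff distrib_left)
    then show ?thesis
      using coeffs.subspace_scale[OF U \<open>u \<in> U\<close>] coeffs.subspace_scale[OF V \<open>v \<in> V\<close>]
      by (simp add: ssumI)
  qed
qed

lemma ssum_Int_modular:
  assumes C: "coeffs.subspace C" and IC: "I \<subseteq> C"
  shows "ssum U I \<inter> C = ssum (U \<inter> C) I"
proof (intro equalityI subsetI)
  fix z assume z: "z \<in> ssum U I \<inter> C"
  then obtain u i where "u \<in> U" "i \<in> I" "z = u + i" by (blast elim: ssumE)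
  have "z - i \<in> C" using coeffs.subspace_diff[OF C] z IC \<open>i \<in> I\<close> by blast
  then have "u \<in> C" using \<open>z = u + i\<close> by simp
  then show "z \<in> ssum (U \<inter> C) I" using \<open>u \<in> U\<close> \<open>i \<in> I\<close> \<open>z = u + i\<close> by (simp add: ssumI)
next
  fix z assume "z \<in> ssum (U \<inter> C) I"
  then obtain u i where "u \<in> U \<inter> C" "i \<in> I" "z = u + i" by (rule ssumE)
  then show "z \<in> ssum U I \<inter> C"
    using coeffs.subspace_add[OF C] IC by (auto intro: ssumI)
qed

lemma ssum_absorb:
  assumes I: "coeffs.subspace I"
  shows "ssum (ssum (ssum U I) B) I = ssum (ssum U B) I"
proof (intro equalityI subsetI)
  fix z assume "z \<in> ssum (ssum (ssum U I) B) I"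
  then obtain x i' where x: "x \<in> ssum (ssum U I) B" and "i' \<in> I" "z = x + i'"
    by (rule ssumE)
  from x obtain w b where w: "w \<in> ssum U I" and "b \<in> B" "x = w + b"
    by (rule ssumE)
  from w obtain u i where "u \<in> U" "i \<in> I" "w = u + i"
    by (rule ssumE)
  have "z = (u + b) + (i + i')"
    using \<open>z = x + i'\<close> \<open>x = w + b\<close> \<open>w = u + i\<close> by (simp add: algebra_simps)
  then show "z \<in> ssum (ssum U B) I"
    using \<open>u \<in> U\<close> \<open>b \<in> B\<close> coeffs.subspace_add[OF I \<open>i \<in> I\<close> \<open>i' \<in> I\<close>] by (simp add: ssumI)
next
  fix z assume "z \<in> ssum (ssum U B) I"
  then obtain x i where x: "x \<in> ssum U B" and "i \<in> I" "z = x + i" by (rule ssumE)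
  from x obtain u b where "u \<in> U" "b \<in> B" "x = u + b" by (rule ssumE)
  then have "x \<in> ssum (ssum U I) B"
    using subset_ssum_left[OF coeffs.subspace_0[OF I]] by (auto intro: ssumI)
  then show "z \<in> ssum (ssum (ssum U I) B) I"
    using \<open>i \<in> I\<close> \<open>z = x + i\<close> by (simp add: ssumI)
qed

lemma sum_apply: "(\<Sum>v\<in>S. (F v :: 'a \<Rightarrow> 'b::comm_monoid_add)) z = (\<Sum>v\<in>S. F v z)"
  by (induction S rule: infinite_finite_induct) auto

definition lin_indep_mod :: "('k::field) coeffs set \<Rightarrow> 'k coeffs set \<Rightarrow> bool" where
  "lin_indep_mod U S \<longleftrightarrow> (\<forall>c. (\<Sum>s\<in>S. (\<lambda>x. c s * s x)) \<in> U \<longrightarrow> (\<forall>s\<in>S. c s = 0))"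

lemma qdim_lin_indep_mod: "qdim V U = Sup {card S | S. finite S \<and> S \<subseteq> V \<and> lin_indep_mod U S}"
  by (simp add: qdim_def lin_indep_mod_def)

lemma lin_indep_modD:
  "lin_indep_mod U S \<Longrightarrow> (\<Sum>s\<in>S. (\<lambda>x. c s * s x)) \<in> U \<Longrightarrow> s \<in> S \<Longrightarrow> c s = 0"
  by (simp add: lin_indep_mod_def)

lemma lin_indep_mod_anti: "U' \<subseteq> U \<Longrightarrow> lin_indep_mod U S \<Longrightarrow> lin_indep_mod U' S"
  by (auto simp: lin_indep_mod_def)

lemma lin_indep_mod_diff_notin:
  fixes s t :: "('k::field) coeffs"
  assumes "finite S" "lin_indep_mod U S" "s \<in> S" "t \<in> S" "s \<noteq> t"
  shows "s - t \<notin> U"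
proof
  assume "s - t \<in> U"
  define c where "c v = (if v = s then 1 else if v = t then -1 else 0 :: 'k)" for v
  have "(\<Sum>v\<in>S. (\<lambda>x. c v * v x)) = s - t"
  proof
    fix x
    have "(\<Sum>v\<in>S. (\<lambda>x. c v * v x)) x = (\<Sum>v\<in>S. (if v = s then s x else 0) + (if v = t then - t x else 0))"
      unfolding sum_apply using \<open>s \<noteq> t\<close> by (intro sum.cong) (auto simp: c_def)
    also have "\<dots> = (s - t) x" using assms by (simp add: sum.distrib)
    finally show "(\<Sum>v\<in>S. (\<lambda>x. c v * v x)) x = (s - t) x" .
  qed
  then have "c s = 0"
    using lin_indep_modD[OF assms(2)] \<open>s - t \<in> U\<close> \<open>s \<in> S\<close> by simp
  then show False by (simp add: c_def)
qed

lemma lin_indep_mod_image: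
  fixes f :: "('k::field) coeffs \<Rightarrow> 'k coeffs"
  assumes U: "coeffs.subspace U" and S: "finite S" "lin_indep_mod U S"
    and f: "\<And>s. s \<in> S \<Longrightarrow> f s - s \<in> U"
  shows "inj_on f S" "lin_indep_mod U (f ` S)"
proof -
  show inj: "inj_on f S"
  proof (rule inj_onI, rule ccontr)
    fix s t assume st: "s \<in> S" "t \<in> S" "f s = f t" "s \<noteq> t"
    then have "s - t = (f t - t) - (f s - s)" by (simp add: algebra_simps)
    also have "\<dots> \<in> U" using coeffs.subspace_diff[OF U f[OF st(2)] f[OF st(1)]] .
    finally have "s - t \<in> U" .
    then show False using lin_indep_mod_diff_notin[OF S st(1,2,4)] by blast
  qed
  show "lin_indep_mod U (f ` S)"
    unfolding lin_indep_mod_def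
  proof (intro allI impI)
    fix c assume "(\<Sum>v\<in>f ` S. (\<lambda>x. c v * v x)) \<in> U"
    then have image: "(\<Sum>s\<in>S. (\<lambda>x. c (f s) * f s x)) \<in> U"
      by (simp add: sum.reindex[OF inj])
    have error: "(\<Sum>s\<in>S. (\<lambda>x. c (f s) * (f s - s) x)) \<in> U"
      using f by (intro coeffs.subspace_sum[OF U] coeffs.subspace_scale[OF U])
    have "(\<Sum>s\<in>S. (\<lambda>x. c (f s) * s x)) =
        (\<Sum>s\<in>S. (\<lambda>x. c (f s) * f s x)) - (\<Sum>s\<in>S. (\<lambda>x. c (f s) * (f s - s) x))"
      unfolding sum_subtractf[symmetric] by (intro sum.cong refl ext) (simp add: algebra_simps)
    then have "(\<Sum>s\<in>S. (\<lambda>x. c (f s) * s x)) \<in> U"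
      using coeffs.subspace_diff[OF U image error] by simp
    then show "\<forall>v\<in>f ` S. c v = 0"
      using lin_indep_modD[OF S(2), of "\<lambda>s. c (f s)"] by blast
  qed
qed

lemma lin_indep_mod_ssum:
  assumes X: "coeffs.subspace X" and Y: "coeffs.subspace Y"
    and YX: "Y \<subseteq> X" and XI: "X \<inter> I \<subseteq> Y"
    and S: "S \<subseteq> X" "lin_indep_mod Y S"
  shows "lin_indep_mod (ssum Y I) S"
  unfolding lin_indep_mod_def
proof (intro allI impI)
  fix c assume "(\<Sum>s\<in>S. (\<lambda>x. c s * s x)) \<in> ssum Y I"
  then obtain y i where "y \<in> Y" "i \<in> I" and sum_eq: "(\<Sum>s\<in>S. (\<lambda>x. c s * s x)) = y + i"
    by (rule ssumE)
  have "(\<Sum>s\<in>S. (\<lambda>x. c s * s x)) \<in> X"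
    using S(1) by (intro coeffs.subspace_sum[OF X] coeffs.subspace_scale[OF X]) blast
  moreover have "i = (\<Sum>s\<in>S. (\<lambda>x. c s * s x)) - y" using sum_eq by simp
  ultimately have "i \<in> X"
    using coeffs.subspace_diff[OF X _ subsetD[OF YX \<open>y \<in> Y\<close>]] by simp
  then have "i \<in> Y" using XI \<open>i \<in> I\<close> by blast
  then have "(\<Sum>s\<in>S. (\<lambda>x. c s * s x)) \<in> Y"
    using coeffs.subspace_add[OF Y \<open>y \<in> Y\<close>] sum_eq by simp
  then show "\<forall>s\<in>S. c s = 0" using lin_indep_modD[OF S(2)] by blast
qed

lemma lin_indep_mod_representatives:
  assumes Y: "coeffs.subspace Y" and I: "coeffs.subspace I"
    and S: "finite S" "S \<subseteq> ssum X I" "lin_indep_mod (ssum Y I) S"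
  obtains S' where "card S' = card S" "finite S'" "S' \<subseteq> X" "lin_indep_mod Y S'"
proof -
  have "\<forall>s\<in>S. \<exists>x. x \<in> X \<and> s - x \<in> I"
  proof
    fix s assume "s \<in> S"
    with S(2) have "s \<in> ssum X I" by blast
    then obtain x i where "x \<in> X" "i \<in> I" "s = x + i" by (rule ssumE)
    then show "\<exists>x. x \<in> X \<and> s - x \<in> I" by auto
  qed
  from bchoice[OF this] obtain f where f: "\<And>s. s \<in> S \<Longrightarrow> f s \<in> X \<and> s - f s \<in> I"
    by blast
  have diff: "f s - s \<in> ssum Y I" if "s \<in> S" for s
  proof -
    have "s - f s \<in> I" using f[OF that] by (rule conjunct2)
    from coeffs.subspace_neg[OF I this] have "f s - s \<in> I" by simp
    then show ?thesis by (rule subsetD[OF subset_ssum_right[OF coeffs.subspace_0[OF Y]]])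
  qed
  have "card (f ` S) = card S"
    using lin_indep_mod_image(1)[OF subspace_ssum[OF Y I] S(1,3) diff] by (rule card_image)
  moreover have "lin_indep_mod Y (f ` S)"
    using lin_indep_mod_image(2)[OF subspace_ssum[OF Y I] S(1,3) diff]
    by (rule lin_indep_mod_anti[OF subset_ssum_left[OF coeffs.subspace_0[OF I], of Y]])
  moreover have "f ` S \<subseteq> X" using f by (simp add: image_subset_iff)
  ultimately show ?thesis using that finite_imageI[OF S(1)] by blast
qed

lemma qdim_ssum_cancel:
  assumes X: "coeffs.subspace X" and Y: "coeffs.subspace Y" and I: "coeffs.subspace I"
    and YX: "Y \<subseteq> X" and XI: "X \<inter> I \<subseteq> Y"
  shows "qdim (ssum X I) (ssum Y I) = qdim X Y"
proof -
  have "{card S | S. finite S \<and> S \<subseteq> ssum X I \<and> lin_indep_mod (ssum Y I) S} =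
      {card S | S. finite S \<and> S \<subseteq> X \<and> lin_indep_mod Y S}"
  proof (intro equalityI subsetI)
    fix n assume "n \<in> {card S | S. finite S \<and> S \<subseteq> ssum X I \<and> lin_indep_mod (ssum Y I) S}"
    then obtain S where S: "n = card S" "finite S" "S \<subseteq> ssum X I" "lin_indep_mod (ssum Y I) S"
      by blast
    then obtain S' where "card S' = card S" "finite S'" "S' \<subseteq> X" "lin_indep_mod Y S'"
      using lin_indep_mod_representatives[OF Y I] by blast
    then show "n \<in> {card S | S. finite S \<and> S \<subseteq> X \<and> lin_indep_mod Y S}"
      unfolding S(1) by (metis (mono_tags, lifting) mem_Collect_eq)
  next
    fix n assume "n \<in> {card S | S. finite S \<and> S \<subseteq> X \<and> lin_indep_mod Y S}"
    then obtain S where "n = card S" "finite S" "S \<subseteq> X" "lin_indep_mod Y S"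
      by blast
    moreover have "S \<subseteq> ssum X I" using \<open>S \<subseteq> X\<close> subset_ssum_left[OF coeffs.subspace_0[OF I]] by blast
    ultimately show "n \<in> {card S | S. finite S \<and> S \<subseteq> ssum X I \<and> lin_indep_mod (ssum Y I) S}"
      using lin_indep_mod_ssum[OF X Y YX XI] by blast
  qed
  then show ?thesis by (simp add: qdim_lin_indep_mod)
qed

section \<open>The Hilbert functions of the symmetric decomposition\<close>

lemma mpow_antimono: "i \<le> k \<Longrightarrow> mpow r k \<subseteq> mpow r i"
  by (auto simp: mpow_def)

lemma mpow_subset_PS: "mpow r i \<subseteq> PS r"
  by (auto simp: mpow_def)

lemma is_ideal_subset_colon: "is_ideal r I \<Longrightarrow> K \<subseteq> PS r \<Longrightarrow> I \<subseteq> colon r I K"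
  by (auto simp: is_ideal_def colon_def)

(* Csp r I (j+1-b-i) i is the lift of C_A(b)_i + m_A^(i+1) to R, before adding I. *)
definition Csp :: "nat \<Rightarrow> ('k::field) coeffs set \<Rightarrow> nat \<Rightarrow> nat \<Rightarrow> 'k coeffs set" where
  "Csp r I k i = ssum (mpow r i \<inter> colon r I (mpow r k)) (mpow r (Suc i))"

lemma subspace_Csp: "coeffs.subspace I \<Longrightarrow> coeffs.subspace (Csp r I k i)"
  unfolding Csp_def
  by (intro subspace_ssum coeffs.subspace_inter subspace_mpow subspace_colon)

lemma Wsp_eq_ssum_Csp:
  assumes I: "is_ideal r I"
  shows "Wsp r I a i = ssum (Csp r I (socdeg r I + 1 - a - i) i) I"
proof -
  have "coeffs.subspace I" using I by (simp add: is_ideal_def)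
  moreover have "I \<subseteq> colon r I (mpow r k)" for k
    using is_ideal_subset_colon[OF I mpow_subset_PS] .
  ultimately show ?thesis
    unfolding Wsp_def Csp_def by (simp add: ssum_Int_modular[OF subspace_colon] ssum_absorb)
qed

lemma HA_eq_qdim_Csp:
  assumes I: "is_ideal r I"
  shows "HA r I b i = qdim (Csp r I (socdeg r I + 1 - b - i) i) (Csp r I (socdeg r I + 1 - Suc b - i) i)"
proof -
  let ?j = "socdeg r I"
  let ?X = "Csp r I (?j + 1 - b - i) i" and ?Y = "Csp r I (?j + 1 - Suc b - i) i"
  have sub: "coeffs.subspace I" using I by (simp add: is_ideal_def)
  have "?j + 1 - Suc b - i \<le> ?j + 1 - b - i" by arith
  then have "colon r I (mpow r (?j + 1 - Suc b - i)) \<subseteq> colon r I (mpow r (?j + 1 - b - i))"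
    using mpow_antimono unfolding colon_def by blast
  then have YX: "?Y \<subseteq> ?X" by (auto simp: Csp_def ssum_def)
  have XI: "?X \<inter> I \<subseteq> ?Y"
  proof
    fix x assume x: "x \<in> ?X \<inter> I"
    then have "x \<in> ?X" by blast
    then obtain m n where m: "m \<in> mpow r i \<inter> colon r I (mpow r (?j + 1 - b - i))"
      and n: "n \<in> mpow r (Suc i)" and "x = m + n"
      unfolding Csp_def by (rule ssumE)
    have "n \<in> mpow r i" using subsetD[OF mpow_antimono[of i "Suc i" r] n] by simp
    then have "m + n \<in> mpow r i" using m coeffs.subspace_add[OF subspace_mpow] by blast
    then have "x \<in> mpow r i" using \<open>x = m + n\<close> by simp
    moreover have "x \<in> colon r I (mpow r (?j + 1 - Suc b - i))"
      using x is_ideal_subset_colon[OF I mpow_subset_PS] by blast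
    ultimately have "x \<in> mpow r i \<inter> colon r I (mpow r (?j + 1 - Suc b - i))" by blast
    then show "x \<in> ?Y"
      unfolding Csp_def by (rule subsetD[OF subset_ssum_left[OF coeffs.subspace_0[OF subspace_mpow]]])
  qed
  show ?thesis
    unfolding HA_def Wsp_eq_ssum_Csp[OF I]
    by (rule qdim_ssum_cancel[OF subspace_Csp[OF sub] subspace_Csp[OF sub] sub YX XI])
qed

lemma Csp_eq_if_Int_mpow_eq:
  assumes IJ: "I \<inter> mpow r N = J \<inter> mpow r N" and N: "N \<le> i + k"
  shows "Csp r I k i = Csp r J k i"
proof -
  have "ps_mult \<phi> \<psi> \<in> I \<longleftrightarrow> ps_mult \<phi> \<psi> \<in> J" if "\<phi> \<in> mpow r i" "\<psi> \<in> mpow r k" for \<phi> \<psi>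
  proof -
    have "ps_mult \<phi> \<psi> \<in> mpow r N"
      using ps_mult_mpow[OF that] mpow_antimono[OF N] by blast
    then show ?thesis using IJ by blast
  qed
  then have "mpow r i \<inter> colon r I (mpow r k) = mpow r i \<inter> colon r J (mpow r k)"
    by (auto simp: colon_def)
  then show ?thesis by (simp add: Csp_def)
qed

(* For b <= a+1 and every i, i + (j+1-b-i) >= j-a, also when j+1-b-i truncates to 0. *)
lemma psd_eq_if_Int_mpow_eq:
  assumes I: "is_ideal r I" and J: "is_ideal r J"
    and jI: "socdeg r I = j" and jJ: "socdeg r J = j"
    and IJ: "I \<inter> mpow r (j - a) = J \<inter> mpow r (j - a)"
  shows "psd r I a = psd r J a"
proof -
  have Csp_eq: "Csp r I (j + 1 - c - i) i = Csp r J (j + 1 - c - i) i" if "c \<le> Suc a" for c i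
    using that by (intro Csp_eq_if_Int_mpow_eq[OF IJ]) linarith
  have "HA r I b i = HA r J b i" if "b \<le> a" for b i
    unfolding HA_eq_qdim_Csp[OF I] HA_eq_qdim_Csp[OF J] jI jJ
    using Csp_eq[of b i] Csp_eq[of "Suc b" i] that by simp
  then show ?thesis
    unfolding psd_def by (intro map_cong refl ext) auto
qed

theorem corollary1p15:
  fixes r j a :: nat and f :: "('k::field) coeffs"
  assumes "f \<in> DP r" and "has_degree r f j" and "a \<le> j"
  shows "psd r (Ann r f) a = psd r (Ann r (trunc_ge r f (j - a))) a
    \<and> (\<forall>g u. g \<in> DP r \<longrightarrow> has_degree r g j \<longrightarrow> is_unit_R r u \<longrightarrow>
          g - contract r u f \<in> Dlt r (j - a) \<longrightarrow>
          psd r (Ann r g) a = psd r (Ann r f) a)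
    \<and> is_modification r (Ann r f) (Ann r (trunc_ge r f (j - a))) (a + 1)
    \<and> Ann r f \<inter> mpow r (j - a) = Ann r (trunc_ge r f (j - a)) \<inter> mpow r (j - a)"
proof -
  note f = assms(1) and deg = assms(2)
  let ?t = "trunc_ge r f (j - a)"
  have t: "?t \<in> DP r" "has_degree r ?t j"
    using trunc_ge_DP[OF f] has_degree_trunc_ge[OF deg] by simp_all
  have jf: "socdeg r (Ann r f) = j" by (rule socdeg_Ann[OF f deg])
  have modification: "Ann r f \<inter> mpow r (j - a) = Ann r ?t \<inter> mpow r (j - a)"
    using Ann_Int_mpow_trunc_ge[OF f] by simp
  have "psd r (Ann r g) a = psd r (Ann r f) a"
    if g: "g \<in> DP r" "has_degree r g j" and u: "is_unit_R r u"
      and close: "g - contract r u f \<in> Dlt r (j - a)" for g u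
  proof -
    have "Ann r g \<inter> mpow r (j - a) = Ann r (contract r u f) \<inter> mpow r (j - a)"
      using Ann_Int_mpow_eq_if_trunc_ge_eq[OF g(1) contract_DP[OF f] trunc_ge_eq_if_diff_Dlt[OF close]] .
    then show ?thesis
      unfolding Ann_contract_unit[OF f u]
      by (rule psd_eq_if_Int_mpow_eq[OF is_ideal_Ann[OF g(1)] is_ideal_Ann[OF f] socdeg_Ann[OF g] jf])
  qed
  moreover have "psd r (Ann r f) a = psd r (Ann r ?t) a"
    using psd_eq_if_Int_mpow_eq[OF is_ideal_Ann[OF f] is_ideal_Ann[OF t(1)] jf socdeg_Ann[OF t] modification] .
  ultimately show ?thesis
    using modification by (simp add: is_modification_def jf)
qed

end
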